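(* Let $A\in\mathbb{R}^{m\times N}$ with $N=pn$, and let $\mathbf{x}\in\mathbb{R}^N$ be block $k$-sparse, i.e. $\lVert\mathbf{x}\rVert_{2,0}\le k$. Suppose there exists at least one $q\in(1,\infty]$ such that $$k<\min_{\mathbf{z}\in\ker A\setminus\{\mathbf{0}\}} 2^{\frac{q}{1-q}}\,k_q(\mathbf{z}).$$ Then the unique solution of the noise-free block basis pursuit problem $$\min_{\mathbf{z}\in\mathbb{R}^N}\lVert\mathbf{z}\rVert_{2,1}\quad\text{s.t.}\quad A\mathbf{z}=A\mathbf{x}$$ is $\mathbf{x}$.
   Context: Every $\mathbf{x}\in\mathbb{R}^N$ is partitioned into $p$ consecutive blocks of length $n$: $\mathbf{x}=[\mathbf{x}_1^T,\dots,\mathbf{x}_p^T]^T$ with $\mathbf{x}_i\in\mathbb{R}^n$. Mixed norms: $\lVert\mathbf{x}\rVert_{2,0}=\#\{i:\mathbf{x}_i\neq\mathbf{0}\}$, $\lVert\mathbf{x}\rVert_{2,q}=(\sum_{i=1}^p\lVert\mathbf{x}_i\rVert_2^q)^{1/q}$ for $0<q<\infty$, $\lVert\mathbf{x}\rVert_{2,\infty}=\max_i\lVert\mathbf{x}_i\rVert_2$. For nonzero $\mathbf{x}$ and $q\in(1,\infty)$ the $q$-ratio block sparsity is $k_q(\mathbf{x})=\left(\lVert\mathbf{x}\rVert_{2,1}/\lVert\mathbf{x}\rVert_{2,q}\right)^{q/(q-1)}$, and $k_\infty(\mathbf{x})=\lVert\mathbf{x}\rVert_{2,1}/\lVert\mathbf{x}\rVert_{2,\infty}$.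 For $q=\infty$ the exponent $q/(1-q)$ is interpreted as its limit $-1$ (and $q/(q-1)$ as $1$). $\ker A=\{\mathbf{z}:A\mathbf{z}=\mathbf{0}\}$. *)

theory Defs
  imports "HOL-Analysis.Analysis"
begin

text \<open>Vectors of R^N are represented as functions nat => real vanishing outside {..<N}.
  A vector is split into p consecutive blocks of length n (N = p*n); block i consists of
  the entries i*n, ..., i*n+n-1.  A matrix A in R^(m x N) is a function nat => nat => real
  of which only the entries A i j with i < m, j < N matter.\<close>

definition vecs :: "nat \<Rightarrow> (nat \<Rightarrow> real) set" where
  "vecs N = {z. \<forall>j\<ge>N. z j = 0}"

definition matvec :: "nat \<Rightarrow> nat \<Rightarrow> (nat \<Rightarrow> nat \<Rightarrow> real) \<Rightarrow> (nat \<Rightarrow> real) \<Rightarrow> (nat \<Rightarrow> real)" where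
  "matvec m N A z = (\<lambda>i. if i < m then (\<Sum>j<N. A i j * z j) else 0)"

definition kernel :: "nat \<Rightarrow> nat \<Rightarrow> (nat \<Rightarrow> nat \<Rightarrow> real) \<Rightarrow> (nat \<Rightarrow> real) set" where
  "kernel m N A = {z \<in> vecs N. matvec m N A z = (\<lambda>_. 0)}"

definition block_norm :: "nat \<Rightarrow> (nat \<Rightarrow> real) \<Rightarrow> nat \<Rightarrow> real" where
  "block_norm n x i = sqrt (\<Sum>j<n. (x (i * n + j))\<^sup>2)"

definition norm20 :: "nat \<Rightarrow> nat \<Rightarrow> (nat \<Rightarrow> real) \<Rightarrow> nat" where
  "norm20 p n x = card {i. i < p \<and> (\<exists>j<n. x (i * n + j) \<noteq> 0)}"

definition norm21 :: "nat \<Rightarrow> nat \<Rightarrow> (nat \<Rightarrow> real) \<Rightarrow> real" where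
  "norm21 p n x = (\<Sum>i<p. block_norm n x i)"

definition norm2q :: "nat \<Rightarrow> nat \<Rightarrow> real \<Rightarrow> (nat \<Rightarrow> real) \<Rightarrow> real" where
  "norm2q p n q x = (\<Sum>i<p. block_norm n x i powr q) powr (1 / q)"

definition norm2inf :: "nat \<Rightarrow> nat \<Rightarrow> (nat \<Rightarrow> real) \<Rightarrow> real" where
  "norm2inf p n x = Max (block_norm n x ` {..<p})"

definition kq :: "nat \<Rightarrow> nat \<Rightarrow> ereal \<Rightarrow> (nat \<Rightarrow> real) \<Rightarrow> real" where
  "kq p n q x = (if q = \<infinity> then norm21 p n x / norm2inf p n x
     else (norm21 p n x / norm2q p n (real_of_ereal q) x)
            powr (real_of_ereal q / (real_of_ereal q - 1)))"

definition twofac :: "ereal \<Rightarrow> real" where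
  "twofac q = (if q = \<infinity> then 2 powr (-1)
     else 2 powr (real_of_ereal q / (1 - real_of_ereal q)))"

end

theory Submission
  imports Defs
begin

text \<open>If k < 2^(q/(1-q)) k_q(h) for every nonzero h \<in> ker A, then Hoelder's inequality gives
  \<parallel>h_S\<parallel>_{2,1} \<le> |S|^(1-1/q) \<parallel>h\<parallel>_{2,q} < \<parallel>h\<parallel>_{2,1} / 2 for every set S of at most k blocks:
  this is the block null space property of order k.  For a feasible z \<noteq> x put h = z - x \<in> ker A
  and let S be the block support of x; then
  \<parallel>x\<parallel>_{2,1} \<le> \<parallel>z_S\<parallel>_{2,1} + \<parallel>h_S\<parallel>_{2,1} < \<parallel>z_S\<parallel>_{2,1} + \<parallel>h_{S^c}\<parallel>_{2,1} = \<parallel>z\<parallel>_{2,1},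
  so x is the unique minimiser.\<close>

lemma sum_powr_le_sum_of_powr:
  fixes f :: "'a \<Rightarrow> real"
  assumes "finite I" and "1 \<le> r" and nonneg: "\<And>i. i \<in> I \<Longrightarrow> 0 \<le> f i"
  shows "(\<Sum>i\<in>I. f i) powr r \<le> (\<Sum>i\<in>I. f i powr r) * card I powr (r - 1)"
proof -
  \<comment> \<open>Drop the zero terms: powr_convex only gives convexity on {0<..}.\<close>
  define J where "J = {i\<in>I. 0 < f i}"
  have "J \<subseteq> I" "finite J"
    using \<open>finite I\<close> by (auto simp: J_def)
  have sum_J: "(\<Sum>i\<in>I. f i) = (\<Sum>i\<in>J. f i)"
    by (rule sum.mono_neutral_right[OF \<open>finite I\<close> \<open>J \<subseteq> I\<close>])
       (use nonneg in \<open>auto simp: J_def less_le\<close>)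
  have sum_powr_J: "(\<Sum>i\<in>I. f i powr r) = (\<Sum>i\<in>J. f i powr r)"
    by (rule sum.mono_neutral_right[OF \<open>finite I\<close> \<open>J \<subseteq> I\<close>])
       (use nonneg in \<open>auto simp: J_def less_le\<close>)
  show ?thesis
  proof (cases "J = {}")
    case True
    then show ?thesis by (simp add: sum_J sum_nonneg)
  next
    case False
    define c where "c = real (card J)"
    have "0 < c"
      using False \<open>finite J\<close> by (simp add: c_def card_gt_0_iff)
    have "(\<Sum>i\<in>J. (1/c) *\<^sub>R f i) powr r \<le> (\<Sum>i\<in>J. (1/c) * f i powr r)"
      by (rule convex_on_sum[OF \<open>finite J\<close> False powr_convex[OF \<open>1 \<le> r\<close>]])
         (use \<open>0 < c\<close> in \<open>auto simp: c_def J_def\<close>)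
    then have mean: "((\<Sum>i\<in>J. f i) / c) powr r \<le> (\<Sum>i\<in>J. f i powr r) / c"
      by (simp add: sum_distrib_left[symmetric] sum_divide_distrib[symmetric])
    have "(\<Sum>i\<in>J. f i) powr r = ((\<Sum>i\<in>J. f i) / c) powr r * c powr r"
      using \<open>0 < c\<close> by (simp add: powr_divide)
    also have "\<dots> \<le> (\<Sum>i\<in>J. f i powr r) / c * c powr r"
      by (rule mult_right_mono[OF mean]) simp
    also have "\<dots> = (\<Sum>i\<in>J. f i powr r) * c powr (r - 1)"
      using \<open>0 < c\<close> by (simp add: powr_diff)
    also have "\<dots> \<le> (\<Sum>i\<in>J. f i powr r) * card I powr (r - 1)"
      using \<open>1 \<le> r\<close> card_mono[OF \<open>finite I\<close> \<open>J \<subseteq> I\<close>]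
      by (auto simp: c_def intro!: mult_left_mono powr_mono2 sum_nonneg)
    finally show ?thesis by (simp add: sum_J sum_powr_J)
  qed
qed

lemma block_norm_nonneg: "0 \<le> block_norm n x i"
  by (simp add: block_norm_def sum_nonneg)

lemma block_norm_eq_0_iff: "block_norm n x i = 0 \<longleftrightarrow> (\<forall>j<n. x (i * n + j) = 0)"
  by (auto simp: block_norm_def sum_nonneg_eq_0_iff)

lemma block_norm_add_le:
  "block_norm n (\<lambda>j. x j + y j) i \<le> block_norm n x i + block_norm n y i"
  unfolding block_norm_def L2_set_def[symmetric] by (rule L2_set_triangle_ineq)

lemma block_norm_le_add_diff:
  "block_norm n x i \<le> block_norm n z i + block_norm n (\<lambda>j. z j - x j) i"
proof -
  have "block_norm n x i = block_norm n (\<lambda>j. z j + (x j - z j)) i"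
    by simp
  also have "\<dots> \<le> block_norm n z i + block_norm n (\<lambda>j. x j - z j) i"
    by (rule block_norm_add_le)
  also have "block_norm n (\<lambda>j. x j - z j) i = block_norm n (\<lambda>j. z j - x j) i"
    by (simp add: block_norm_def power2_commute)
  finally show ?thesis .
qed

lemma ex_block_norm_pos:
  assumes "h \<in> vecs (p * n)" and "h \<noteq> (\<lambda>_. 0)"
  shows "\<exists>i<p. 0 < block_norm n h i"
proof -
  obtain j where "h j \<noteq> 0"
    using assms(2) by auto
  with assms(1) have "j < p * n"
    unfolding vecs_def using not_le by blast
  then have "0 < n" "j div n < p"
    by (auto simp: less_mult_imp_div_less intro: Nat.gr0I)
  moreover have "h (j div n * n + j mod n) \<noteq> 0"
    using \<open>h j \<noteq> 0\<close> by simp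
  ultimately show ?thesis
    using block_norm_nonneg block_norm_eq_0_iff by (metis less_le mod_less_divisor)
qed

lemma sum_block_norm_le_card_powr_norm2q:
  assumes "1 \<le> q" and "S \<subseteq> {..<p}"
  shows "(\<Sum>i\<in>S. block_norm n h i) \<le> card S powr (1 - 1/q) * norm2q p n q h"
proof -
  let ?b = "block_norm n h"
  have "finite S"
    using assms(2) finite_subset by blast
  have "(\<Sum>i\<in>S. ?b i) = ((\<Sum>i\<in>S. ?b i) powr q) powr (1/q)"
    using \<open>1 \<le> q\<close> by (simp add: powr_powr sum_nonneg block_norm_nonneg)
  also have "\<dots> \<le> ((\<Sum>i\<in>S. ?b i powr q) * card S powr (q - 1)) powr (1/q)"
    using \<open>1 \<le> q\<close> sum_powr_le_sum_of_powr[OF \<open>finite S\<close> \<open>1 \<le> q\<close>, of ?b]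
    by (auto simp: block_norm_nonneg intro!: powr_mono2)
  also have "\<dots> = card S powr (1 - 1/q) * (\<Sum>i\<in>S. ?b i powr q) powr (1/q)"
    using \<open>1 \<le> q\<close> by (simp add: powr_mult powr_powr diff_divide_distrib)
  also have "\<dots> \<le> card S powr (1 - 1/q) * norm2q p n q h"
    unfolding norm2q_def using \<open>1 \<le> q\<close> assms(2)
    by (auto intro!: mult_left_mono powr_mono2 sum_nonneg sum_mono2)
  finally show ?thesis .
qed

lemma sum_block_norm_le_card_norm2inf:
  assumes "S \<subseteq> {..<p}"
  shows "(\<Sum>i\<in>S. block_norm n h i) \<le> card S * norm2inf p n h"
  unfolding norm2inf_def using assms by (intro sum_bounded_above Max_ge) auto

lemma less_two_powr_mult_ratio_powrD:
  fixes a b k r :: real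
  assumes "1 < r" and "0 < b" and "0 \<le> a" and "0 \<le> k"
    and "k < 2 powr (r / (1 - r)) * (a / b) powr (r / (r - 1))"
  shows "2 * k powr (1 - 1/r) * b < a"
proof -
  define e where "e = r / (r - 1)"
  define Y where "Y = a / (2 * b)"
  have "0 < e" "0 \<le> Y" "1 / e = 1 - 1/r"
    using assms(1-3) by (auto simp: e_def Y_def field_simps)
  have "r / (1 - r) = - e"
    using assms(1) by (simp add: e_def field_simps)
  then have "2 powr (r / (1 - r)) * (a / b) powr e = ((a / b) / 2) powr e"
    by (simp only: powr_divide[of "a / b"] powr_minus_divide) simp
  also have "\<dots> = Y powr e"
    by (simp add: Y_def field_simps)
  finally have "2 powr (r / (1 - r)) * (a / b) powr e = Y powr e" .
  with assms(5) have "k < Y powr e"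
    by (simp add: e_def)
  then have "k powr (1 / e) < (Y powr e) powr (1 / e)"
    using \<open>0 < e\<close> \<open>0 \<le> k\<close> by (intro powr_less_mono2) auto
  also have "\<dots> = Y"
    using \<open>0 < e\<close> \<open>0 \<le> Y\<close> by (simp add: powr_powr)
  finally show ?thesis
    using \<open>1 / e = 1 - 1/r\<close> \<open>0 < b\<close> by (simp add: Y_def field_simps)
qed

lemma twice_sum_block_norm_less_norm21_if_less_kq_inf:
  assumes "h \<in> vecs (p * n)" and "h \<noteq> (\<lambda>_. 0)"
    and "S \<subseteq> {..<p}" and "card S \<le> k"
    and "real k < twofac \<infinity> * kq p n \<infinity> h"
  shows "2 * (\<Sum>i\<in>S. block_norm n h i) < norm21 p n h"
proof -
  obtain i0 where "i0 < p" and "0 < block_norm n h i0"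
    using ex_block_norm_pos[OF assms(1,2)] by blast
  moreover have "block_norm n h i0 \<le> norm2inf p n h"
    unfolding norm2inf_def using \<open>i0 < p\<close> by (intro Max_ge) auto
  ultimately have "0 < norm2inf p n h"
    by linarith
  have "(\<Sum>i\<in>S. block_norm n h i) \<le> real k * norm2inf p n h"
    using sum_block_norm_le_card_norm2inf[OF assms(3)] \<open>card S \<le> k\<close> \<open>0 < norm2inf p n h\<close>
    by (meson order.trans mult_right_mono of_nat_mono less_imp_le)
  moreover have "2 * real k * norm2inf p n h < norm21 p n h"
    using assms(5) \<open>0 < norm2inf p n h\<close>
    by (simp add: twofac_def kq_def powr_minus_divide pos_less_divide_eq)
  ultimately show ?thesis
    by linarith
qed

lemma twice_sum_block_norm_less_norm21_if_less_kq:
  assumes "1 < r" and "h \<in> vecs (p * n)" and "h \<noteq> (\<lambda>_. 0)"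
    and "S \<subseteq> {..<p}" and "card S \<le> k"
    and "real k < twofac (ereal r) * kq p n (ereal r) h"
  shows "2 * (\<Sum>i\<in>S. block_norm n h i) < norm21 p n h"
proof -
  obtain i0 where "i0 < p" and "0 < block_norm n h i0"
    using ex_block_norm_pos[OF assms(2,3)] by blast
  then have "0 < block_norm n h i0 powr r"
    by simp
  also have "\<dots> \<le> (\<Sum>i<p. block_norm n h i powr r)"
    using \<open>i0 < p\<close> by (intro member_le_sum) auto
  finally have "0 < norm2q p n r h"
    by (simp add: norm2q_def)
  have "real (card S) powr (1 - 1/r) \<le> real k powr (1 - 1/r)"
    using \<open>1 < r\<close> \<open>card S \<le> k\<close> by (intro powr_mono2) auto
  with \<open>0 < norm2q p n r h\<close>
  have "(\<Sum>i\<in>S. block_norm n h i) \<le> real k powr (1 - 1/r) * norm2q p n r h"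
    using sum_block_norm_le_card_powr_norm2q[OF _ assms(4), of r] \<open>1 < r\<close>
    by (meson order.trans mult_right_mono less_imp_le)
  moreover have "2 * real k powr (1 - 1/r) * norm2q p n r h < norm21 p n h"
    using assms(1,6) \<open>0 < norm2q p n r h\<close>
    by (intro less_two_powr_mult_ratio_powrD)
       (auto simp: twofac_def kq_def norm21_def sum_nonneg block_norm_nonneg)
  ultimately show ?thesis
    by linarith
qed

text \<open>The block null space property of order k, in the form 2 \<parallel>h_S\<parallel>_{2,1} < \<parallel>h\<parallel>_{2,1},
  which is equivalent to the usual \<parallel>h_S\<parallel>_{2,1} < \<parallel>h_{S^c}\<parallel>_{2,1}.\<close>
definition block_null_space_property ::
    "nat \<Rightarrow> nat \<Rightarrow> nat \<Rightarrow> (nat \<Rightarrow> nat \<Rightarrow> real) \<Rightarrow> nat \<Rightarrow> bool" where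
  "block_null_space_property m p n A k \<longleftrightarrow>
     (\<forall>h \<in> kernel m (p * n) A - {\<lambda>_. 0}. \<forall>S \<subseteq> {..<p}. card S \<le> k \<longrightarrow>
        2 * (\<Sum>i\<in>S. block_norm n h i) < norm21 p n h)"

lemma block_null_space_property_if_less_INF:
  assumes "1 < q"
    and "ereal (real k) < (INF z \<in> kernel m (p * n) A - {\<lambda>_. 0}. ereal (twofac q * kq p n q z))"
  shows "block_null_space_property m p n A k"
  unfolding block_null_space_property_def
proof (intro ballI allI impI)
  fix h S
  assume h: "h \<in> kernel m (p * n) A - {\<lambda>_. 0}" and "S \<subseteq> {..<p}" "card S \<le> k"
  then have "h \<in> vecs (p * n)" "h \<noteq> (\<lambda>_. 0)"
    by (auto simp: kernel_def)
  have "real k < twofac q * kq p n q h"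
    using order.strict_trans2[OF assms(2) INF_lower[OF h]] by simp
  with \<open>1 < q\<close> show "2 * (\<Sum>i\<in>S. block_norm n h i) < norm21 p n h"
    using \<open>h \<in> vecs (p * n)\<close> \<open>h \<noteq> (\<lambda>_. 0)\<close> \<open>S \<subseteq> {..<p}\<close> \<open>card S \<le> k\<close>
      twice_sum_block_norm_less_norm21_if_less_kq_inf
      twice_sum_block_norm_less_norm21_if_less_kq
    by (cases q) auto
qed

lemma matvec_diff:
  "matvec m N A (\<lambda>j. z j - x j) = (\<lambda>i. matvec m N A z i - matvec m N A x i)"
  by (auto simp: matvec_def right_diff_distrib sum_subtractf)

lemma diff_in_kernel:
  assumes "z \<in> vecs N" and "x \<in> vecs N" and "matvec m N A z = matvec m N A x"
  shows "(\<lambda>j. z j - x j) \<in> kernel m N A"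
  using assms by (simp add: kernel_def vecs_def matvec_diff)

lemma norm21_less_if_block_null_space_property:
  assumes nsp: "block_null_space_property m p n A k"
    and "x \<in> vecs (p * n)" and "norm20 p n x \<le> k"
    and "z \<in> vecs (p * n)" and "matvec m (p * n) A z = matvec m (p * n) A x" and "z \<noteq> x"
  shows "norm21 p n x < norm21 p n z"
proof -
  define S where "S = {i. i < p \<and> (\<exists>j<n. x (i * n + j) \<noteq> 0)}"
  define h where "h = (\<lambda>j. z j - x j)"
  have "S \<subseteq> {..<p}" and "card S \<le> k"
    using \<open>norm20 p n x \<le> k\<close> by (auto simp: S_def norm20_def)
  have "h \<in> kernel m (p * n) A - {\<lambda>_. 0}"
    using diff_in_kernel[OF assms(4,2,5)] \<open>z \<noteq> x\<close> by (auto simp: h_def fun_eq_iff)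
  with nsp \<open>S \<subseteq> {..<p}\<close> \<open>card S \<le> k\<close>
  have nsp_h: "2 * (\<Sum>i\<in>S. block_norm n h i) < norm21 p n h"
    by (auto simp: block_null_space_property_def)
  have split: "(\<Sum>i<p. f i) = (\<Sum>i\<in>{..<p} - S. f i) + (\<Sum>i\<in>S. f i)" for f :: "nat \<Rightarrow> real"
    by (rule sum.subset_diff[OF \<open>S \<subseteq> {..<p}\<close>]) simp
  have x_off: "x (i * n + j) = 0" if "i \<in> {..<p} - S" "j < n" for i j
    using that by (auto simp: S_def)
  have "norm21 p n x = (\<Sum>i\<in>S. block_norm n x i)"
    unfolding norm21_def split using x_off by (simp add: block_norm_eq_0_iff sum.neutral)
  also have "\<dots> \<le> (\<Sum>i\<in>S. block_norm n z i) + (\<Sum>i\<in>S. block_norm n h i)"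
    unfolding sum.distrib[symmetric] h_def
    by (intro sum_mono block_norm_le_add_diff)
  also have "\<dots> < (\<Sum>i\<in>S. block_norm n z i) + (\<Sum>i\<in>{..<p} - S. block_norm n h i)"
    using nsp_h unfolding norm21_def split by linarith
  also have "\<dots> = norm21 p n z"
    unfolding norm21_def split using x_off by (simp add: block_norm_def h_def)
  finally show ?thesis .
qed

theorem proposition1:
  fixes m p n k :: nat and A :: "nat \<Rightarrow> nat \<Rightarrow> real" and x :: "nat \<Rightarrow> real"
  assumes x_vec: "x \<in> vecs (p * n)"
    and x_sparse: "norm20 p n x \<le> k"
    and q_ex: "\<exists>q::ereal. 1 < q \<and>
      ereal (real k) < (INF z \<in> kernel m (p * n) A - {\<lambda>_. 0}. ereal (twofac q * kq p n q z))"
  shows "{z \<in> vecs (p * n). matvec m (p * n) A z = matvec m (p * n) A x \<and>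
            (\<forall>w \<in> vecs (p * n). matvec m (p * n) A w = matvec m (p * n) A x
               \<longrightarrow> norm21 p n z \<le> norm21 p n w)} = {x}"
proof -
  have "block_null_space_property m p n A k"
    using q_ex block_null_space_property_if_less_INF by blast
  note x_strict_min = norm21_less_if_block_null_space_property[OF this x_vec x_sparse]
  show ?thesis
  proof (intro set_eqI iffI)
    fix z
    assume "z \<in> {z \<in> vecs (p * n). matvec m (p * n) A z = matvec m (p * n) A x \<and>
      (\<forall>w \<in> vecs (p * n). matvec m (p * n) A w = matvec m (p * n) A x
         \<longrightarrow> norm21 p n z \<le> norm21 p n w)}"
    then have "z \<in> vecs (p * n)" "matvec m (p * n) A z = matvec m (p * n) A x"
      "norm21 p n z \<le> norm21 p n x"
      using x_vec by auto
    then show "z \<in> {x}"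
      using x_strict_min by (metis not_le singletonI)
  qed (use x_vec x_strict_min in \<open>force intro: less_imp_le\<close>)
qed

end
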